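(* Let $D\subset\mathbb{C}$ be an open disk centered at $0$, $f_1,\dots,f_p:D\to\mathbb{C}$ analytic, $A_1,\dots,A_p\in\mathbb{C}^{n\times n}$ with $M(\lambda)=\sum_{m=1}^pf_m(\lambda)A_m$ satisfying $M(\lambda)^T=M(\lambda)$ on $D$, and $M_j:=M^{(j)}(0)$. Let $\mathbf{C}$, $\mathbf{S}$, $\mathbf{A}$, $\mathbf{B}$, $G_{k+1}$, $F_m$ be as described in the context, and assume the infinite matrix $\mathbf{S}$ is invertible. Let $\mathbf{q}_1$ be an infinite block vector whose only nonzero block is its first block $q_1\in\mathbb{C}^n$. Then Algorithm I (indefinite Lanczos) with starting vector $\mathbf{q}_1$ is applicable to the symmetric infinite problem $\mathbf{S}\mathbf{A}\mathbf{x}=\lambda\mathbf{S}\mathbf{B}\mathbf{x}$, and for every iteration $k$: the vector $\mathbf{q}_k$ has only its first $k$ blocks nonzero, the matrix whose columns are these $k$ blocks equals the matrix $Q_k$ generated by Algorithm II (infinite Lanczos) with starting matrix $Q_1=[q_1]$, and the coefficients $t_{i,j}$ and $\omega_i$ produced by the two algorithms coincide.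
   Context: Definitions. $\mathbf{C}=[c_{i,j}]_{i,j\ge1}$ is the infinite matrix determined by $c_{i,1}=1/(i+1)$ ($i\ge1$), $c_{i-1,j}=\frac{j}{i}c_{i,j-1}$ ($i,j>1$). $\mathbf{S}$ is the infinite block matrix with $n\times n$ blocks $S_{1,1}=I$, $S_{1,j}=S_{j,1}=0$ ($j\ge2$), $S_{i,j}=c_{i-1,j-1}M_{i+j-2}$ ($i,j\ge2$). $\mathbf{A}=\operatorname{diag}(-M_0,I,I,\dots)$. $\mathbf{B}$ has first block row $(M_1,\frac12M_2,\frac13M_3,\dots)$, blocks $\frac1jI$ at positions $(j+1,j)$, zeros elsewhere. $G_{k+1}\in\mathbb{R}^{(k+1)\times(k+1)}$ has $g_{j,1}=g_{1,j}=1/j$ and $g_{i,j}=c_{i-1,j}/j$ for $i,j\ge2$; $F_m\in\mathbb{C}^{(k+1)\times(k+1)}$ has $(i,j)$ entry $f_m^{(i+j-1)}(0)$. $\circ$ is the Hadamard product, $^T$ the non-conjugate transpose. Algorithm I (indefinite Lanczos for a symmetric pencil $\hat A x=\lambda\hat Bx$, here $\hat A=\mathbf{S}\mathbf{A}$, $\hat B=\mathbf{S}\mathbf{B}$): set $q_0=0$, $t_{0,1}=0$, $\omega_1=q_1^T\hat Bq_1$. For $k=1,2,\dots$: $w=\hat A^{-1}\hat Bq_k$; $z=\hat Bw$; $\alpha=z^Tq_k$, $\beta=z^Tq_{k-1}$, $\gamma=z^Tw$; $t_{k,k}=\alpha/\omega_k$, $t_{k-1,k}=\beta/\omega_{k-1}$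 (taken as $0$ when $k=1$); $w_\perp=w-t_{k,k}q_k-t_{k-1,k}q_{k-1}$; $t_{k+1,k}=\|w_\perp\|_2$; $q_{k+1}=w_\perp/t_{k+1,k}$; $\omega_{k+1}=(\gamma-2t_{k,k}\alpha-2t_{k-1,k}\beta+t_{k,k}^2\omega_k+t_{k-1,k}^2\omega_{k-1})/t_{k+1,k}^2$. Algorithm II (infinite Lanczos), with $Q_1\in\mathbb{C}^{n\times1}$: set $Q_0=0$, $t_{0,1}=0$, $\omega_1=Q_1^TM_1Q_1$. For $k=1,2,\dots$, with $Q_k=[\tilde q_1,\dots,\tilde q_k]\in\mathbb{C}^{n\times k}$: compute $w_1=-M_0^{-1}\sum_{j=1}^k\frac{M_j}{j}\tilde q_j$ and $W=w_1e_1^T+Q_kD\in\mathbb{C}^{n\times(k+1)}$, where $D\in\mathbb{R}^{k\times(k+1)}$ has $d_{j,j+1}=1/j$ and zeros elsewhere; compute $Z=\sum_{m=1}^pA_mW(G_{k+1}\circ F_m)$; pad $Q_k$ and $Q_{k-1}$ with zero columns to size $n\times(k+1)$ and compute $\alpha=\operatorname{vec}(Z)^T\operatorname{vec}(Q_k)$, $\beta=\operatorname{vec}(Z)^T\operatorname{vec}(Q_{k-1})$, $\gamma=\operatorname{vec}(Z)^T\operatorname{vec}(W)$; $t_{k,k}=\alpha/\omega_k$, $t_{k-1,k}=\beta/\omega_{k-1}$ ($0$ when $k=1$); $W_\perp=W-t_{k,k}Q_k-t_{k-1,k}Q_{k-1}$; $t_{k+1,k}=\|W_\perp\|_F$; $Q_{k+1}=W_\perp/t_{k+1,k}$;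 $\omega_{k+1}=(\gamma-2t_{k,k}\alpha-2t_{k-1,k}\beta+t_{k,k}^2\omega_k+t_{k-1,k}^2\omega_{k-1})/t_{k+1,k}^2$. *)

theory Defs
  imports "HOL-Complex_Analysis.Complex_Analysis"
begin

(* Conventions.
   n x n blocks: complex^'n^'n ('n an arbitrary finite index type, n = CARD('n)).
   Infinite block vectors: nat => complex^'n, blocks indexed 1,2,3,... (index 0 unused, kept 0).
   Infinite block matrices: nat => nat => complex^'n^'n, blocks indexed by i,j >= 1.
   Finite n x k matrices (Algorithm II): nat => complex^'n, columns indexed 1..k. *)

type_synonym 'n ivec = "nat \<Rightarrow> complex^'n::finite"
type_synonym 'n imat = "nat \<Rightarrow> nat \<Rightarrow> complex^'n^'n"

text \<open>non-conjugate bilinear form x^T y\<close>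
definition bdot :: "complex^'n::finite \<Rightarrow> complex^'n \<Rightarrow> complex" where
  "bdot x y = (\<Sum>i\<in>UNIV. x$i * y$i)"

definition smat :: "complex \<Rightarrow> complex^'n^'n \<Rightarrow> complex^'n^'n" where
  "smat a X = (\<chi> i j. a * X$i$j)"

definition bvec :: "('n::finite) ivec \<Rightarrow> bool" where
  "bvec x \<longleftrightarrow> x 0 = 0 \<and> (\<exists>N. \<forall>i>N. x i = 0)"

definition imv :: "('n::finite) imat \<Rightarrow> ('n::finite) ivec \<Rightarrow> ('n::finite) ivec" where
  "imv X x i = (if i = 0 then 0 else (\<Sum>l. X i (Suc l) *v x (Suc l)))"

definition imm :: "('n::finite) imat \<Rightarrow> ('n::finite) imat \<Rightarrow> ('n::finite) imat" where
  "imm X Y i j = (\<Sum>l. X i (Suc l) ** Y (Suc l) j)"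

definition idot :: "('n::finite) ivec \<Rightarrow> ('n::finite) ivec \<Rightarrow> complex" where
  "idot x y = (\<Sum>l. bdot (x (Suc l)) (y (Suc l)))"

definition inorm :: "('n::finite) ivec \<Rightarrow> real" where
  "inorm x = sqrt (\<Sum>l. (norm (x (Suc l)))^2)"

definition imat_invertible :: "('n::finite) imat \<Rightarrow> bool" where
  "imat_invertible X \<longleftrightarrow> (\<exists>Y.
     (\<forall>i\<ge>1. \<forall>j\<ge>1. (\<lambda>l. Y i (Suc l) ** X (Suc l) j) sums (if i = j then mat 1 else 0)) \<and>
     (\<forall>i\<ge>1. \<forall>j\<ge>1. (\<lambda>l. X i (Suc l) ** Y (Suc l) j) sums (if i = j then mat 1 else 0)))"

text \<open>The matrix C: c_{i,1} = 1/(i+1), c_{i-1,j} = j/i c_{i,j-1}, i.e.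
  c_{i,j+2} = (j+2)/(i+1) c_{i+1,j+1}. Meaningful for i,j >= 1.\<close>
fun cc :: "nat \<Rightarrow> nat \<Rightarrow> real" where
  "cc i 0 = 0"
| "cc i (Suc 0) = 1 / (real i + 1)"
| "cc i (Suc (Suc j)) = real (Suc (Suc j)) / (real i + 1) * cc (Suc i) (Suc j)"

definition Mfun :: "(nat \<Rightarrow> complex \<Rightarrow> complex) \<Rightarrow> (nat \<Rightarrow> complex^'n^'n) \<Rightarrow> nat
    \<Rightarrow> complex \<Rightarrow> complex^'n^'n" where
  "Mfun f Am p z = (\<Sum>m=1..p. smat (f m z) (Am m))"

definition Mder :: "(nat \<Rightarrow> complex \<Rightarrow> complex) \<Rightarrow> (nat \<Rightarrow> complex^'n^'n) \<Rightarrow> nat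
    \<Rightarrow> nat \<Rightarrow> complex^'n^'n" where
  "Mder f Am p j = (\<chi> a b. (deriv ^^ j) (\<lambda>z. Mfun f Am p z $ a $ b) 0)"

definition Smat :: "(nat \<Rightarrow> complex \<Rightarrow> complex) \<Rightarrow> (nat \<Rightarrow> complex^'n^'n) \<Rightarrow> nat \<Rightarrow> ('n::finite) imat" where
  "Smat f Am p i j =
     (if i = 1 \<and> j = 1 then mat 1
      else if i \<ge> 2 \<and> j \<ge> 2 then smat (complex_of_real (cc (i - 1) (j - 1))) (Mder f Am p (i + j - 2))
      else 0)"

definition Amat :: "(nat \<Rightarrow> complex \<Rightarrow> complex) \<Rightarrow> (nat \<Rightarrow> complex^'n^'n) \<Rightarrow> nat \<Rightarrow> ('n::finite) imat" where
  "Amat f Am p i j =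
     (if i = 1 \<and> j = 1 then - Mder f Am p 0
      else if i = j \<and> i \<ge> 2 then mat 1
      else 0)"

definition Bmat :: "(nat \<Rightarrow> complex \<Rightarrow> complex) \<Rightarrow> (nat \<Rightarrow> complex^'n^'n) \<Rightarrow> nat \<Rightarrow> ('n::finite) imat" where
  "Bmat f Am p i j =
     (if i = 1 \<and> j \<ge> 1 then smat (complex_of_real (1 / real j)) (Mder f Am p j)
      else if j \<ge> 1 \<and> i = j + 1 then smat (complex_of_real (1 / real j)) (mat 1)
      else 0)"

text \<open>G_{k+1} entries (independent of k apart from the size) and F_m entries\<close>
definition gg :: "nat \<Rightarrow> nat \<Rightarrow> real" where
  "gg i j = (if j = 1 then 1 / real i else if i = 1 then 1 / real j
             else cc (i - 1) j / real j)"

definition Fm :: "(nat \<Rightarrow> complex \<Rightarrow> complex) \<Rightarrow> nat \<Rightarrow> nat \<Rightarrow> nat \<Rightarrow> complex" where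
  "Fm f m i j = (deriv ^^ (i + j - 1)) (f m) 0"

text \<open>state at iteration k: (q_{k-1}, q_k, omega_{k-1}, omega_k);
  w = Ahat^{-1} Bhat q_k is the (finitely supported) solution of Ahat w = Bhat q_k.
  The step returns the new state and (t_{k,k}, t_{k-1,k}, t_{k+1,k}).\<close>
definition stepI :: "('n::finite) imat \<Rightarrow> ('n::finite) imat \<Rightarrow> ('n::finite) ivec \<times> ('n::finite) ivec \<times> complex \<times> complex
    \<Rightarrow> (('n::finite) ivec \<times> ('n::finite) ivec \<times> complex \<times> complex) \<times> (complex \<times> complex \<times> complex)" where
  "stepI Ah Bh st = (case st of (qp, qc, wp, wc) \<Rightarrow>
     (let w = (THE w. bvec w \<and> imv Ah w = imv Bh qc);
          z = imv Bh w;
          \<alpha> = idot z qc; \<beta> = idot z qp; \<gamma> = idot z w;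
          tkk = \<alpha> / wc; tpk = \<beta> / wp;
          wperp = (\<lambda>i. w i - tkk *s qc i - tpk *s qp i);
          tn = complex_of_real (inorm wperp);
          qn = (\<lambda>i. inverse tn *s wperp i);
          wn = (\<gamma> - 2 * tkk * \<alpha> - 2 * tpk * \<beta> + tkk^2 * wc + tpk^2 * wp) / tn^2
      in ((qc, qn, wc, wn), (tkk, tpk, tn))))"

fun stateI :: "('n::finite) imat \<Rightarrow> ('n::finite) imat \<Rightarrow> ('n::finite) ivec \<Rightarrow> nat \<Rightarrow> ('n::finite) ivec \<times> ('n::finite) ivec \<times> complex \<times> complex" where
  "stateI Ah Bh q1 0 = ((\<lambda>_. 0), q1, 0, idot q1 (imv Bh q1))"
| "stateI Ah Bh q1 (Suc k) = fst (stepI Ah Bh (stateI Ah Bh q1 k))"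

definition qI :: "('n::finite) imat \<Rightarrow> ('n::finite) imat \<Rightarrow> ('n::finite) ivec \<Rightarrow> nat \<Rightarrow> ('n::finite) ivec" where
  "qI Ah Bh q1 k = fst (snd (stateI Ah Bh q1 (k - 1)))"
definition omegaI :: "('n::finite) imat \<Rightarrow> ('n::finite) imat \<Rightarrow> ('n::finite) ivec \<Rightarrow> nat \<Rightarrow> complex" where
  "omegaI Ah Bh q1 k = snd (snd (snd (stateI Ah Bh q1 (k - 1))))"
definition tI :: "('n::finite) imat \<Rightarrow> ('n::finite) imat \<Rightarrow> ('n::finite) ivec \<Rightarrow> nat \<Rightarrow> complex \<times> complex \<times> complex" where
  "tI Ah Bh q1 k = snd (stepI Ah Bh (stateI Ah Bh q1 (k - 1)))"

definition padc :: "nat \<Rightarrow> (nat \<Rightarrow> complex^'n) \<Rightarrow> nat \<Rightarrow> complex^'n" where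
  "padc k Q j = (if 1 \<le> j \<and> j \<le> k then Q j else 0)"

text \<open>step k; state (Q_{k-1}, Q_k, omega_{k-1}, omega_k), Q_k having k columns\<close>
definition stepII :: "(nat \<Rightarrow> complex \<Rightarrow> complex) \<Rightarrow> (nat \<Rightarrow> complex^'n^'n) \<Rightarrow> nat \<Rightarrow> nat
    \<Rightarrow> (nat \<Rightarrow> complex^'n) \<times> (nat \<Rightarrow> complex^'n) \<times> complex \<times> complex
    \<Rightarrow> ((nat \<Rightarrow> complex^'n) \<times> (nat \<Rightarrow> complex^'n) \<times> complex \<times> complex) \<times> (complex \<times> complex \<times> complex)" where
  "stepII f Am p k st = (case st of (Qp, Qc, wp, wc) \<Rightarrow>
     (let w1 = - (matrix_inv (Mder f Am p 0) *v
                  (\<Sum>j=1..k. smat (complex_of_real (1 / real j)) (Mder f Am p j) *v Qc j));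
          W = (\<lambda>i. if i = 1 then w1
                    else if 2 \<le> i \<and> i \<le> k + 1 then complex_of_real (1 / real (i - 1)) *s Qc (i - 1)
                    else 0);
          Z = (\<lambda>j. if 1 \<le> j \<and> j \<le> k + 1 then
                     (\<Sum>m=1..p. Am m *v (\<Sum>i=1..k+1. (complex_of_real (gg i j) * Fm f m i j) *s W i))
                   else 0);
          \<alpha> = (\<Sum>j=1..k+1. bdot (Z j) (padc k Qc j));
          \<beta> = (\<Sum>j=1..k+1. bdot (Z j) (padc (k - 1) Qp j));
          \<gamma> = (\<Sum>j=1..k+1. bdot (Z j) (W j));
          tkk = \<alpha> / wc; tpk = \<beta> / wp;
          Wperp = (\<lambda>j. if 1 \<le> j \<and> j \<le> k + 1 then
                        W j - tkk *s padc k Qc j - tpk *s padc (k - 1) Qp j else 0);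
          tn = complex_of_real (sqrt (\<Sum>j=1..k+1. (norm (Wperp j))^2));
          Qn = (\<lambda>j. inverse tn *s Wperp j);
          wn = (\<gamma> - 2 * tkk * \<alpha> - 2 * tpk * \<beta> + tkk^2 * wc + tpk^2 * wp) / tn^2
      in ((Qc, Qn, wc, wn), (tkk, tpk, tn))))"

fun stateII :: "(nat \<Rightarrow> complex \<Rightarrow> complex) \<Rightarrow> (nat \<Rightarrow> complex^'n^'n) \<Rightarrow> nat \<Rightarrow> complex^'n
    \<Rightarrow> nat \<Rightarrow> (nat \<Rightarrow> complex^'n) \<times> (nat \<Rightarrow> complex^'n) \<times> complex \<times> complex" where
  "stateII f Am p q1 0 = ((\<lambda>_. 0), (\<lambda>j. if j = 1 then q1 else 0), 0,
                         bdot q1 (Mder f Am p 1 *v q1))"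
| "stateII f Am p q1 (Suc k) = fst (stepII f Am p (Suc k) (stateII f Am p q1 k))"

definition QII where "QII f Am p q1 k = fst (snd (stateII f Am p q1 (k - 1)))"
definition omegaII where "omegaII f Am p q1 k = snd (snd (snd (stateII f Am p q1 (k - 1))))"
definition tII where "tII f Am p q1 k = snd (stepII f Am p k (stateII f Am p q1 (k - 1)))"

end

theory Submission
  imports Defs
begin

text \<open>
  Algorithm I preserves finite support. If \<open>q\<^sub>k\<close> lives in the first \<open>k\<close> blocks, then
  \<open>w = (-M\<^sub>0\<^sup>-\<^sup>1 \<Sum>\<^sub>j M\<^sub>j q\<^sub>j / j, q\<^sub>1/1, \<dots>, q\<^sub>k/k)\<close>, which is the matrix \<open>W\<close> of Algorithm II, solves
  \<open>A w = B q\<^sub>k\<close>, and it is the only finitely supported solution of \<open>S A w = S B q\<^sub>k\<close> because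
  \<open>S\<close> (having a left inverse) and \<open>A\<close> (block diagonal with invertible blocks) are injective on
  finitely supported vectors. The \<open>(i,j)\<close> block of \<open>S B\<close> is \<open>g\<^sub>i\<^sub>j M\<^sub>i\<^sub>+\<^sub>j\<^sub>-\<^sub>1\<close> and
  \<open>M\<^sub>d = \<Sum>\<^sub>m f\<^sub>m\<^sup>(\<^sup>d\<^sup>)(0) A\<^sub>m\<close>, so \<open>z = S B w\<close> is the matrix \<open>Z\<close>, and every inner product and norm
  of Algorithm I becomes the corresponding finite sum of Algorithm II; induction on \<open>k\<close> shows that
  the two algorithms produce the same data. Symmetry of \<open>S A\<close> and \<open>S B\<close> follows from
  \<open>c\<^sub>i\<^sub>j = i! j! / (i + j)!\<close> and the symmetry of all derivatives \<open>M\<^sub>j\<close>.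
\<close>

lemma invertible_matrix_inv:
  fixes M :: "'a::semiring_1^'n^'n"
  assumes "invertible M"
  shows "M ** matrix_inv M = mat 1" and "matrix_inv M ** M = mat 1"
proof -
  have "\<exists>M'. M ** M' = mat 1 \<and> M' ** M = mat 1"
    using assms unfolding invertible_def by blast
  from someI_ex[OF this] show "M ** matrix_inv M = mat 1" "matrix_inv M ** M = mat 1"
    unfolding matrix_inv_def by auto
qed

lemma matrix_vector_mult_sum_left: "(\<Sum>i\<in>I. X i) *v v = (\<Sum>i\<in>I. X i *v v)"
  by (induct I rule: infinite_finite_induct) (simp_all add: matrix_vector_mult_add_rdistrib)

lemma matrix_vector_mult_uminus_left: "(- A) *v x = - (A *v (x::'a::comm_ring_1^'n))"
  by (simp add: matrix_vector_mult_def vec_eq_iff sum_negf)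

lemma transpose_uminus: "transpose (- A) = - transpose (A::'a::ring_1^'n^'m)"
  by (simp add: transpose_def vec_eq_iff)

lemma transpose_zero [simp]: "transpose (0::'a::zero^'n^'m) = 0"
  by (simp add: transpose_def vec_eq_iff)

lemma bounded_linear_matrix_vector_mult_left: "bounded_linear (\<lambda>X::complex^'n^'m. X *v x)"
proof -
  have "linear (\<lambda>X::complex^'n^'m. X *v x)"
    by (rule linearI) (auto simp: matrix_vector_mult_add_rdistrib vec_eq_iff
        matrix_vector_mult_def scaleR_sum_right sum.distrib distrib_right)
  then show ?thesis using linear_conv_bounded_linear by blast
qed

lemma smat_smat: "smat a (smat b X) = smat (a * b) X"
  by (simp add: smat_def vec_eq_iff mult.assoc)

lemma smat_matrix_vector_mult: "smat a X *v v = a *s (X *v v)"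
  by (simp add: smat_def matrix_vector_mult_def vec_eq_iff sum_distrib_left mult_ac)

lemma matrix_mul_smat_mat_1: "X ** smat a (mat 1) = smat a X"
  by (simp add: smat_def matrix_matrix_mult_def vec_eq_iff mat_def if_distrib cong: if_cong)

lemma transpose_smat: "transpose (smat a X) = smat a (transpose X)"
  by (simp add: smat_def transpose_def vec_eq_iff)

lemma cc_eq_fact:
  assumes "j \<ge> 1"
  shows "cc i j = fact i * fact j / fact (i + j)"
proof -
  have "cc i (Suc b) = fact i * fact (Suc b) / fact (i + Suc b)" for b
  proof (induction b arbitrary: i)
    case 0
    have "fact i * (real i + 1) \<noteq> 0" by simp
    then show ?case by (simp add: field_simps)
  next
    case (Suc b)
    have "real i + 1 \<noteq> 0" by simp
    have "cc i (Suc (Suc b)) =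
        real (Suc (Suc b)) / (real i + 1) * ((real i + 1) * fact i * fact (Suc b) / fact (i + Suc (Suc b)))"
      using Suc.IH by (simp only: cc.simps fact_Suc[of i] add_Suc_shift of_nat_Suc add.commute[of 1])
    also have "\<dots> = fact i * (real (Suc (Suc b)) * fact (Suc b)) / fact (i + Suc (Suc b))"
      using \<open>real i + 1 \<noteq> 0\<close> by (simp only: field_simps) simp
    finally show ?case by (simp only: fact_Suc[of "Suc b"])
  qed
  then show ?thesis using assms by (metis Suc_le_D One_nat_def)
qed

lemma cc_commute: "i \<ge> 1 \<Longrightarrow> j \<ge> 1 \<Longrightarrow> cc i j = cc j i"
  by (simp add: cc_eq_fact add.commute mult.commute)

lemma gg_eq_fact:
  assumes "i \<ge> 1" "j \<ge> 1"
  shows "gg i j = fact (i - 1) * fact (j - 1) / fact (i + j - 1)"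
proof -
  obtain a b where ab: "i = Suc a" "j = Suc b"
    using assms by (metis Suc_le_D One_nat_def)
  have "gg i j = cc a (Suc b) / real (Suc b)"
    using ab by (auto simp: gg_def cc_eq_fact)
  also have "\<dots> = fact a * (real (Suc b) * fact b) / fact (a + Suc b) / real (Suc b)"
    by (simp only: cc_eq_fact fact_Suc[of b])
  also have "\<dots> = fact a * fact b / fact (a + Suc b)"
    by (simp del: fact_Suc of_nat_Suc)
  finally show ?thesis using ab by simp
qed

lemma gg_commute: "i \<ge> 1 \<Longrightarrow> j \<ge> 1 \<Longrightarrow> gg i j = gg j i"
  by (simp add: gg_eq_fact add.commute mult.commute)

lemma higher_deriv_sum_cmult:
  fixes g :: "'i \<Rightarrow> complex \<Rightarrow> complex"
  assumes "finite I" "\<forall>m\<in>I. g m holomorphic_on S" "open S" "z \<in> S"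
  shows "(deriv ^^ d) (\<lambda>w. \<Sum>m\<in>I. c m * g m w) z = (\<Sum>m\<in>I. c m * (deriv ^^ d) (g m) z)"
  using assms(1,2)
proof (induction I rule: finite_induct)
  case empty
  then show ?case by simp
next
  case (insert x F)
  have "(deriv ^^ d) (\<lambda>w. c x * g x w + (\<Sum>m\<in>F. c m * g m w)) z =
        (deriv ^^ d) (\<lambda>w. c x * g x w) z + (deriv ^^ d) (\<lambda>w. \<Sum>m\<in>F. c m * g m w) z"
    using insert assms(3,4) by (intro higher_deriv_add) (auto intro!: holomorphic_intros)
  moreover have "(deriv ^^ d) (\<lambda>w. c x * g x w) z = c x * (deriv ^^ d) (g x) z"
    using insert assms(3,4) by (intro higher_deriv_cmult) auto
  ultimately show ?case using insert by simp
qed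

lemma Mder_transpose:
  assumes "r > 0" and "\<forall>z\<in>ball 0 r. transpose (Mfun f Am p z) = Mfun f Am p z"
  shows "transpose (Mder f Am p d) = Mder f Am p d"
proof -
  have "(deriv ^^ d) (\<lambda>z. Mfun f Am p z $ b $ a) 0 = (deriv ^^ d) (\<lambda>z. Mfun f Am p z $ a $ b) 0" for a b
  proof (rule higher_deriv_cong_ev)
    have "\<forall>\<^sub>F z in nhds 0. z \<in> ball (0::complex) r"
      using assms(1) by (intro eventually_nhds_in_open) auto
    then show "\<forall>\<^sub>F z in nhds 0. Mfun f Am p z $ b $ a = Mfun f Am p z $ a $ b"
    proof eventually_elim
      case (elim z)
      then have "transpose (Mfun f Am p z) $ a $ b = Mfun f Am p z $ a $ b"
        using assms(2) by simp
      then show ?case by (simp add: transpose_def)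
    qed
  qed simp
  then show ?thesis by (simp add: Mder_def transpose_def vec_eq_iff)
qed

lemma Mder_eq_sum:
  assumes "r > 0" and "\<forall>m\<in>{1..p}. f m holomorphic_on ball 0 r"
  shows "Mder f Am p d = (\<Sum>m=1..p. smat ((deriv ^^ d) (f m) 0) (Am m))"
proof -
  have "(\<lambda>z. Mfun f Am p z $ a $ b) = (\<lambda>z. \<Sum>m\<in>{1..p}. Am m $ a $ b * f m z)" for a b
    by (simp add: Mfun_def smat_def mult.commute)
  then have "(deriv ^^ d) (\<lambda>z. Mfun f Am p z $ a $ b) 0 = (\<Sum>m=1..p. Am m $ a $ b * (deriv ^^ d) (f m) 0)"
    for a b using assms by (simp add: higher_deriv_sum_cmult)
  then show ?thesis by (simp add: Mder_def vec_eq_iff smat_def mult.commute)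
qed

lemma suminf_Suc_eq_sum:
  fixes g :: "nat \<Rightarrow> 'a::{t2_space,comm_monoid_add}"
  assumes "\<And>i. i > N \<Longrightarrow> g i = 0"
  shows "(\<Sum>l. g (Suc l)) = (\<Sum>i=1..N. g i)"
proof -
  have "(\<lambda>l. g (Suc l)) sums (\<Sum>l<N. g (Suc l))"
    by (rule sums_finite) (auto intro: assms)
  then show ?thesis by (simp add: sums_iff sum.atLeast1_atMost_eq)
qed

lemma imv_eq_sum:
  assumes "\<forall>i>N. x i = 0"
  shows "imv X x i = (if i = 0 then 0 else \<Sum>l=1..N. X i l *v x l)"
  unfolding imv_def by (subst suminf_Suc_eq_sum[of N]) (simp_all add: assms)

lemma idot_eq_sum:
  assumes "\<forall>i>N. y i = 0"
  shows "idot x y = (\<Sum>j=1..N. bdot (x j) (y j))"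
  unfolding idot_def by (rule suminf_Suc_eq_sum) (simp add: assms bdot_def)

lemma idot_eq_sum_left:
  assumes "\<forall>i>N. x i = 0"
  shows "idot x y = (\<Sum>j=1..N. bdot (x j) (y j))"
  unfolding idot_def by (rule suminf_Suc_eq_sum) (simp add: assms bdot_def)

lemma inorm_eq_sum:
  assumes "\<forall>i>N. y i = 0"
  shows "inorm y = sqrt (\<Sum>j=1..N. (norm (y j))^2)"
  unfolding inorm_def by (subst suminf_Suc_eq_sum[of N]) (simp_all add: assms)

lemma imv_diff:
  assumes "\<forall>i>N. x i = 0" "\<forall>i>N. y i = 0"
  shows "imv X (\<lambda>i. x i - y i) = (\<lambda>i. imv X x i - imv X y i)"
  using assms by (auto simp: imv_eq_sum[of N] matrix_vector_mult_diff_distrib sum_subtractf)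

lemma imv_left_inverse_eq_0:
  fixes X Y :: "('n::finite) imat"
  assumes Y: "\<forall>i\<ge>1. \<forall>j\<ge>1. (\<lambda>l. Y i (Suc l) ** X (Suc l) j) sums (if i = j then mat 1 else 0)"
    and u: "u 0 = 0" "\<forall>i>N. u i = 0" and Xu: "\<forall>i\<ge>1. imv X u i = 0"
  shows "u i = 0"
proof (cases "i = 0")
  case True
  then show ?thesis using u by simp
next
  case False
  have "(\<lambda>l. \<Sum>m=1..N. (Y i (Suc l) ** X (Suc l) m) *v u m) sums
        (\<Sum>m=1..N. (if i = m then mat 1 else 0) *v u m)"
    using Y False
    by (intro sums_sum bounded_linear.sums[OF bounded_linear_matrix_vector_mult_left]) auto
  moreover have "(\<Sum>m=1..N. (if i = m then mat 1 else 0) *v u m) = u i"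
    using u False by (auto simp: if_distrib[of "\<lambda>X. X *v _"] sum.delta cong: if_cong)
  moreover have "(\<Sum>m=1..N. (Y i (Suc l) ** X (Suc l) m) *v u m) = Y i (Suc l) *v imv X u (Suc l)" for l
    by (simp add: imv_eq_sum[OF u(2)] vec.sum matrix_vector_mul_assoc)
  ultimately have "(\<lambda>l. 0) sums u i" using Xu by simp
  then show ?thesis using sums_unique2 sums_zero by blast
qed

abbreviation Ahat :: "(nat \<Rightarrow> complex \<Rightarrow> complex) \<Rightarrow> (nat \<Rightarrow> complex^'n^'n) \<Rightarrow> nat \<Rightarrow> ('n::finite) imat"
  where "Ahat f Am p \<equiv> imm (Smat f Am p) (Amat f Am p)"

abbreviation Bhat :: "(nat \<Rightarrow> complex \<Rightarrow> complex) \<Rightarrow> (nat \<Rightarrow> complex^'n^'n) \<Rightarrow> nat \<Rightarrow> ('n::finite) imat"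
  where "Bhat f Am p \<equiv> imm (Smat f Am p) (Bmat f Am p)"

lemma imm_Amat: "j \<ge> 1 \<Longrightarrow> imm X (Amat f Am p) i j = X i j ** Amat f Am p j j"
  unfolding imm_def by (subst suminf_finite[of "{j - 1}"]) (auto simp: Amat_def)

lemma imv_imm_Amat:
  "imv (imm X (Amat f Am p)) x = imv X (\<lambda>l. if l = 0 then 0 else Amat f Am p l l *v x l)"
  by (rule ext) (simp add: imv_def imm_Amat matrix_vector_mul_assoc)

lemma Ahat_eq:
  assumes "i \<ge> 1" "j \<ge> 1"
  shows "Ahat f Am p i j =
    (if i = 1 \<and> j = 1 then - Mder f Am p 0 else if i \<ge> 2 \<and> j \<ge> 2 then Smat f Am p i j else 0)"
  using assms by (auto simp: imm_Amat Smat_def Amat_def)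

lemma imm_Bmat:
  assumes "j \<ge> 1"
  shows "imm X (Bmat f Am p) i j = X i 1 ** Bmat f Am p 1 j + X i (Suc j) ** Bmat f Am p (Suc j) j"
  unfolding imm_def using assms by (subst suminf_finite[of "{0, j}"]) (auto simp: Bmat_def)

lemma Bhat_eq:
  assumes "i \<ge> 1" "j \<ge> 1"
  shows "Bhat f Am p i j = smat (gg i j) (Mder f Am p (i + j - 1))"
proof (cases "i = 1")
  case True
  then show ?thesis using assms by (simp add: imm_Bmat Smat_def Bmat_def gg_def)
next
  case False
  then have "gg i j = cc (i - 1) j / real j" using assms by (simp add: gg_def)
  then show ?thesis using assms False
    by (simp add: imm_Bmat Smat_def Bmat_def matrix_mul_smat_mat_1 smat_smat)
qed

context
  fixes f :: "nat \<Rightarrow> complex \<Rightarrow> complex" and Am :: "nat \<Rightarrow> complex^'n::finite^'n" and p :: nat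
  assumes Mder_symmetric: "\<And>d. transpose (Mder f Am p d) = Mder f Am p d"
begin

lemma Smat_transpose: "transpose (Smat f Am p i j) = Smat f Am p j i"
  using cc_commute[of "i - 1" "j - 1"]
  by (auto simp: Smat_def transpose_smat Mder_symmetric add.commute)

lemma Ahat_transpose: "i \<ge> 1 \<Longrightarrow> j \<ge> 1 \<Longrightarrow> transpose (Ahat f Am p i j) = Ahat f Am p j i"
  by (auto simp: Ahat_eq transpose_uminus Mder_symmetric Smat_transpose)

lemma Bhat_transpose: "i \<ge> 1 \<Longrightarrow> j \<ge> 1 \<Longrightarrow> transpose (Bhat f Am p i j) = Bhat f Am p j i"
  by (simp add: Bhat_eq transpose_smat Mder_symmetric gg_commute add.commute)

end

text \<open>The matrix \<open>W = w\<^sub>1 e\<^sub>1\<^sup>T + Q\<^sub>k D\<close> of Algorithm II, read as an infinite block vector.\<close>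
definition lanczos_W :: "(nat \<Rightarrow> complex \<Rightarrow> complex) \<Rightarrow> (nat \<Rightarrow> complex^'n^'n) \<Rightarrow> nat \<Rightarrow> nat
    \<Rightarrow> (nat \<Rightarrow> complex^'n::finite) \<Rightarrow> nat \<Rightarrow> complex^'n" where
  "lanczos_W f Am p k Q =
     (\<lambda>i. if i = 1 then - (matrix_inv (Mder f Am p 0) *v
                       (\<Sum>j=1..k. smat (complex_of_real (1 / real j)) (Mder f Am p j) *v Q j))
          else if 2 \<le> i \<and> i \<le> k + 1 then complex_of_real (1 / real (i - 1)) *s Q (i - 1)
          else 0)"

lemma lanczos_W_eq_0: "i > k + 1 \<Longrightarrow> lanczos_W f Am p k Q i = 0"
  by (simp add: lanczos_W_def)

lemma bvec_lanczos_W: "bvec (lanczos_W f Am p k Q)"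
  unfolding bvec_def by (intro conjI exI[of _ "k + 1"]) (simp_all add: lanczos_W_def)

lemma Ahat_lanczos_W:
  assumes M0: "invertible (Mder f Am p 0)" and Q: "\<forall>i>k. Q i = 0"
  shows "imv (Ahat f Am p) (lanczos_W f Am p k Q) = imv (Bhat f Am p) Q"
proof
  fix i
  let ?W = "lanczos_W f Am p k Q" and ?M = "Mder f Am p"
  have lhs: "imv (Ahat f Am p) ?W i = (if i = 0 then 0 else \<Sum>l=1..k+1. Ahat f Am p i l *v ?W l)"
    by (rule imv_eq_sum) (simp add: lanczos_W_eq_0)
  have rhs: "imv (Bhat f Am p) Q i = (if i = 0 then 0 else \<Sum>l=1..k. Bhat f Am p i l *v Q l)"
    by (rule imv_eq_sum) (simp add: Q)
  consider "i = 0" | "i = 1" | "i \<ge> 2" by linarith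
  then show "imv (Ahat f Am p) ?W i = imv (Bhat f Am p) Q i"
  proof cases
    case 1
    then show ?thesis using lhs rhs by simp
  next
    case 2
    have "(\<Sum>l=1..k+1. Ahat f Am p 1 l *v ?W l) = - ?M 0 *v ?W 1"
      by (subst sum.mono_neutral_right[of "{1..k+1}" "{1}"]) (auto simp: Ahat_eq)
    also have "\<dots> = (?M 0 ** matrix_inv (?M 0)) *v
                  (\<Sum>j=1..k. smat (complex_of_real (1 / real j)) (?M j) *v Q j)"
      by (simp add: lanczos_W_def matrix_vector_mul_assoc[symmetric] matrix_vector_mult_uminus_left vec.neg)
    also have "\<dots> = (\<Sum>j=1..k. smat (complex_of_real (1 / real j)) (?M j) *v Q j)"
      by (simp add: invertible_matrix_inv[OF M0])
    also have "\<dots> = (\<Sum>l=1..k. Bhat f Am p 1 l *v Q l)"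
      by (intro sum.cong refl) (simp add: Bhat_eq gg_def)
    finally show ?thesis using lhs rhs 2 by simp
  next
    case 3
    have "(\<Sum>l=1..k+1. Ahat f Am p i l *v ?W l) = (\<Sum>l=Suc 1..Suc k. Ahat f Am p i l *v ?W l)"
      using 3 by (intro sum.mono_neutral_right) (auto simp: Ahat_eq)
    also have "\<dots> = (\<Sum>l=1..k. Ahat f Am p i (Suc l) *v ?W (Suc l))"
      by (rule sum.shift_bounds_cl_Suc_ivl)
    also have "\<dots> = (\<Sum>l=1..k. Bhat f Am p i l *v Q l)"
      using 3 by (intro sum.cong refl)
        (simp add: Ahat_eq lanczos_W_def imm_Bmat Smat_def Bmat_def matrix_mul_smat_mat_1
          smat_matrix_vector_mult vector_scalar_commute)
    finally show ?thesis using lhs rhs 3 by simp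
  qed
qed

lemma Amat_diag_eq_0:
  assumes "invertible (Mder f Am p 0)" "i \<ge> 1" "Amat f Am p i i *v d = 0"
  shows "d = 0"
proof (cases "i = 1")
  case True
  then have "matrix_inv (Mder f Am p 0) *v (Mder f Am p 0 *v d) = 0"
    using assms(3) by (simp add: Amat_def matrix_vector_mult_uminus_left)
  then show ?thesis by (simp add: matrix_vector_mul_assoc invertible_matrix_inv[OF assms(1)])
next
  case False
  then show ?thesis using assms by (simp add: Amat_def)
qed

lemma Ahat_inj:
  assumes M0: "invertible (Mder f Am p 0)" and S: "imat_invertible (Smat f Am p)"
    and w: "bvec w" and w': "bvec w'" and eq: "imv (Ahat f Am p) w = imv (Ahat f Am p) w'"
  shows "w = w'"
proof
  fix i
  obtain Y where Y: "\<forall>i\<ge>1. \<forall>j\<ge>1. (\<lambda>l. Y i (Suc l) ** Smat f Am p (Suc l) j) sums (if i = j then mat 1 else 0)"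
    using S unfolding imat_invertible_def by blast
  obtain N1 N2 where "\<forall>i>N1. w i = 0" "\<forall>i>N2. w' i = 0"
    using w w' unfolding bvec_def by blast
  then have N: "\<forall>i>max N1 N2. w i = 0" "\<forall>i>max N1 N2. w' i = 0"
    by simp_all
  define u where "u = (\<lambda>l. if l = 0 then 0 else Amat f Am p l l *v w l)"
  define u' where "u' = (\<lambda>l. if l = 0 then 0 else Amat f Am p l l *v w' l)"
  have supp: "\<forall>l>max N1 N2. u l = 0" "\<forall>l>max N1 N2. u' l = 0"
    using N by (simp_all add: u_def u'_def)
  have "imv (Smat f Am p) u = imv (Smat f Am p) u'"
    using eq by (simp add: imv_imm_Amat u_def u'_def)
  then have "\<forall>l\<ge>1. imv (Smat f Am p) (\<lambda>l. u l - u' l) l = 0"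
    by (simp add: imv_diff[OF supp])
  moreover have "(\<lambda>l. u l - u' l) 0 = 0" "\<forall>l>max N1 N2. (\<lambda>l. u l - u' l) l = 0"
    using supp by (simp_all add: u_def u'_def)
  ultimately have "u i - u' i = 0"
    using imv_left_inverse_eq_0[OF Y, of "\<lambda>l. u l - u' l" "max N1 N2" i] by simp
  show "w i = w' i"
  proof (cases "i = 0")
    case True
    then show ?thesis using w w' by (simp add: bvec_def)
  next
    case False
    then have "Amat f Am p i i *v (w i - w' i) = 0"
      using \<open>u i - u' i = 0\<close> by (simp add: u_def u'_def matrix_vector_mult_diff_distrib)
    then have "w i - w' i = 0"
      using False Amat_diag_eq_0[OF M0, of i "w i - w' i"] by simp
    then show ?thesis by simp
  qed
qed

lemma Ahat_solution:
  assumes M0: "invertible (Mder f Am p 0)" and S: "imat_invertible (Smat f Am p)"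
    and Q: "\<forall>i>k. Q i = 0"
  shows "\<exists>!w. bvec w \<and> imv (Ahat f Am p) w = imv (Bhat f Am p) Q"
    and "(THE w. bvec w \<and> imv (Ahat f Am p) w = imv (Bhat f Am p) Q) = lanczos_W f Am p k Q"
proof -
  have sol: "bvec (lanczos_W f Am p k Q) \<and> imv (Ahat f Am p) (lanczos_W f Am p k Q) = imv (Bhat f Am p) Q"
    using bvec_lanczos_W Ahat_lanczos_W[OF M0 Q] by blast
  have uniq: "w = lanczos_W f Am p k Q" if "bvec w \<and> imv (Ahat f Am p) w = imv (Bhat f Am p) Q" for w
    using that sol by (auto intro: Ahat_inj[OF M0 S])
  show "\<exists>!w. bvec w \<and> imv (Ahat f Am p) w = imv (Bhat f Am p) Q"
    using sol uniq by blast
  show "(THE w. bvec w \<and> imv (Ahat f Am p) w = imv (Bhat f Am p) Q) = lanczos_W f Am p k Q"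
    using sol uniq by (rule the_equality)
qed

lemma imv_Bhat_eq_sum:
  assumes "r > 0" and "\<forall>m\<in>{1..p}. f m holomorphic_on ball 0 r"
    and x: "\<forall>i>N. x i = 0" and "j \<ge> 1"
  shows "imv (Bhat f Am p) x j =
    (\<Sum>m=1..p. Am m *v (\<Sum>i=1..N. (complex_of_real (gg i j) * Fm f m i j) *s x i))"
proof -
  have "imv (Bhat f Am p) x j = (\<Sum>i=1..N. smat (gg i j) (Mder f Am p (i + j - 1)) *v x i)"
    using assms(4) by (simp add: imv_eq_sum[OF x] Bhat_eq gg_commute add.commute)
  also have "\<dots> = (\<Sum>i=1..N. \<Sum>m=1..p. (complex_of_real (gg i j) * Fm f m i j) *s (Am m *v x i))"
    by (simp add: Mder_eq_sum[OF assms(1,2)] smat_matrix_vector_mult matrix_vector_mult_sum_left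
        vec.scale_sum_right Fm_def)
  also have "\<dots> = (\<Sum>m=1..p. Am m *v (\<Sum>i=1..N. (complex_of_real (gg i j) * Fm f m i j) *s x i))"
    by (subst sum.swap) (simp add: vec.sum vector_scalar_commute)
  finally show ?thesis .
qed

lemma padc_eq:
  assumes "Q 0 = 0" "\<forall>i>k. Q i = 0"
  shows "padc k Q = Q"
  using assms by (auto simp: padc_def fun_eq_iff not_le)

lemma stepI_eq_stepII:
  assumes r: "r > 0" and analytic: "\<forall>m\<in>{1..p}. f m holomorphic_on ball 0 r"
    and M0: "invertible (Mder f Am p 0)" and S: "imat_invertible (Smat f Am p)"
    and Qc: "Qc 0 = 0" "\<forall>i>k. Qc i = 0" and Qp: "Qp 0 = 0" "\<forall>i>k - 1. Qp i = 0"
  shows "stepI (Ahat f Am p) (Bhat f Am p) (Qp, Qc, wp, wc) = stepII f Am p k (Qp, Qc, wp, wc)"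
proof -
  let ?W = "lanczos_W f Am p k Qc"
  let ?Z = "\<lambda>j. if 1 \<le> j \<and> j \<le> k + 1 then
              (\<Sum>m=1..p. Am m *v (\<Sum>i=1..k+1. (complex_of_real (gg i j) * Fm f m i j) *s ?W i))
            else 0"
  have W: "\<forall>i>k+1. ?W i = 0"
    by (simp add: lanczos_W_def)
  have supp: "\<forall>i>k+1. Qc i = 0" "\<forall>i>k+1. Qp i = 0"
    using Qc Qp by simp_all
  have z: "idot (imv (Bhat f Am p) ?W) v = (\<Sum>j=1..k+1. bdot (?Z j) (v j))" if "\<forall>i>k+1. v i = 0" for v
    using that by (simp add: idot_eq_sum[of "k + 1"] imv_Bhat_eq_sum[OF r analytic W])
  have perp: "(if 1 \<le> j \<and> j \<le> k + 1 then ?W j - a *s Qc j - b *s Qp j else 0) =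
      ?W j - a *s Qc j - b *s Qp j" for a b j
    using W supp Qc(1) Qp(1) by (auto simp: lanczos_W_def not_le less_2_cases_iff)
  have norm: "inorm (\<lambda>j. ?W j - a *s Qc j - b *s Qp j) =
      sqrt (\<Sum>j=1..k+1. (norm (?W j - a *s Qc j - b *s Qp j))^2)" for a b
    using W supp by (intro inorm_eq_sum) simp
  txt \<open>With the solve, the inner products and the norm of Algorithm I rewritten as finite sums,
    both steps unfold to literally the same term.\<close>
  show ?thesis
    unfolding stepI_def Let_def prod.case Ahat_solution(2)[OF M0 S Qc(2)]
      z[OF supp(1)] z[OF supp(2)] z[OF W] norm
    unfolding stepII_def Let_def prod.case padc_eq[OF Qc] padc_eq[OF Qp] lanczos_W_def
    unfolding perp[unfolded lanczos_W_def]
    by (rule refl)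
qed

lemma stepII_next_state:
  obtains Qn wn where "fst (stepII f Am p k (Qp, Qc, wp, wc)) = (Qc, Qn, wc, wn)"
    and "Qn 0 = 0" and "\<forall>i>k+1. Qn i = 0"
proof -
  let ?st = "fst (stepII f Am p k (Qp, Qc, wp, wc))"
  have "fst ?st = Qc" "fst (snd (snd ?st)) = wc" "fst (snd ?st) 0 = 0" "\<forall>i>k+1. fst (snd ?st) i = 0"
    by (simp_all only: stepII_def Let_def prod.case fst_conv snd_conv)
      simp_all
  then show thesis
    by (intro that[of "fst (snd ?st)" "snd (snd (snd ?st))"]) (simp_all add: prod_eq_iff)
qed

lemma stateII_support:
  assumes "stateII f Am p q1 k = (Qp, Qc, wp, wc)"
  shows "Qp 0 = 0 \<and> (\<forall>i>k. Qp i = 0) \<and> Qc 0 = 0 \<and> (\<forall>i>Suc k. Qc i = 0)"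
  using assms
proof (induction k arbitrary: Qp Qc wp wc)
  case 0
  then show ?case by auto
next
  case (Suc k)
  obtain Qp' Qc' wp' wc' where st: "stateII f Am p q1 k = (Qp', Qc', wp', wc')"
    by (metis prod_cases4)
  obtain Qn wn where "fst (stepII f Am p (Suc k) (Qp', Qc', wp', wc')) = (Qc', Qn, wc', wn)"
    and "Qn 0 = 0" and "\<forall>i>Suc k + 1. Qn i = 0"
    by (rule stepII_next_state)
  then show ?case using Suc st by auto
qed

lemma stateI_eq_stateII:
  assumes r: "r > 0" and analytic: "\<forall>m\<in>{1..p}. f m holomorphic_on ball 0 r"
    and M0: "invertible (Mder f Am p 0)" and S: "imat_invertible (Smat f Am p)"
  shows "stateI (Ahat f Am p) (Bhat f Am p) (\<lambda>i. if i = 1 then q1 else 0) k = stateII f Am p q1 k"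
proof (induction k)
  case 0
  let ?q = "\<lambda>i. if i = (1::nat) then q1 else 0"
  have "imv (Bhat f Am p) ?q 1 = Mder f Am p 1 *v q1"
    by (simp add: imv_eq_sum[of 1] Bhat_eq gg_def smat_matrix_vector_mult)
  then have "idot ?q (imv (Bhat f Am p) ?q) = bdot q1 (Mder f Am p 1 *v q1)"
    by (simp add: idot_eq_sum_left[of 1])
  then show ?case by simp
next
  case (Suc k)
  obtain Qp Qc wp wc where st: "stateII f Am p q1 k = (Qp, Qc, wp, wc)"
    by (metis prod_cases4)
  then have "Qp 0 = 0" "\<forall>i>Suc k - 1. Qp i = 0" "Qc 0 = 0" "\<forall>i>Suc k. Qc i = 0"
    using stateII_support[OF st] by simp_all
  then show ?case
    using Suc.IH st stepI_eq_stepII[OF r analytic M0 S] by simp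
qed

lemma lanczos_iterates_coincide:
  fixes q1 :: "complex^'n::finite"
  defines "qv1 \<equiv> \<lambda>i. if i = 1 then q1 else 0"
  assumes r_pos: "r > 0" and analytic: "\<forall>m\<in>{1..p}. f m holomorphic_on ball 0 r"
    and M0_inv: "invertible (Mder f Am p 0)" and S_inv: "imat_invertible (Smat f Am p)"
    and k: "k \<ge> 1"
  shows "(\<exists>!w. bvec w \<and> imv (Ahat f Am p) w = imv (Bhat f Am p) (qI (Ahat f Am p) (Bhat f Am p) qv1 k)) \<and>
    bvec (qI (Ahat f Am p) (Bhat f Am p) qv1 k) \<and>
    (\<forall>i>k. qI (Ahat f Am p) (Bhat f Am p) qv1 k i = 0) \<and>
    (\<forall>j\<in>{1..k}. qI (Ahat f Am p) (Bhat f Am p) qv1 k j = QII f Am p q1 k j) \<and>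
    tI (Ahat f Am p) (Bhat f Am p) qv1 k = tII f Am p q1 k \<and>
    omegaI (Ahat f Am p) (Bhat f Am p) qv1 k = omegaII f Am p q1 k"
proof -
  obtain Qp Qc wp wc where st: "stateII f Am p q1 (k - 1) = (Qp, Qc, wp, wc)"
    by (metis prod_cases4)
  have Qp: "Qp 0 = 0" "\<forall>i>k - 1. Qp i = 0" and Qc: "Qc 0 = 0" "\<forall>i>k. Qc i = 0"
    using stateII_support[OF st] k by auto
  have stI: "stateI (Ahat f Am p) (Bhat f Am p) qv1 (k - 1) = (Qp, Qc, wp, wc)"
    using stateI_eq_stateII[OF r_pos analytic M0_inv S_inv] st by (simp add: qv1_def)
  have "qI (Ahat f Am p) (Bhat f Am p) qv1 k = Qc" "QII f Am p q1 k = Qc"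
    "omegaI (Ahat f Am p) (Bhat f Am p) qv1 k = omegaII f Am p q1 k"
    "tI (Ahat f Am p) (Bhat f Am p) qv1 k = tII f Am p q1 k"
    using st stI stepI_eq_stepII[OF r_pos analytic M0_inv S_inv Qc Qp]
    by (simp_all add: qI_def QII_def omegaI_def omegaII_def tI_def tII_def)
  moreover have "bvec Qc"
    using Qc unfolding bvec_def by blast
  ultimately show ?thesis
    using Ahat_solution(1)[OF M0_inv S_inv Qc(2)] Qc by simp
qed

theorem theorem5:
  fixes r :: real and p :: nat
    and f :: "nat \<Rightarrow> complex \<Rightarrow> complex"
    and Am :: "nat \<Rightarrow> complex^'n^'n"
    and q1 :: "complex^'n"
  assumes r_pos: "r > 0"
    and analytic: "\<forall>m\<in>{1..p}. f m holomorphic_on ball 0 r"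
    and symmetric: "\<forall>z\<in>ball 0 r. transpose (Mfun f Am p z) = Mfun f Am p z"
    and M0_inv: "invertible (Mder f Am p 0)"
    and S_inv: "imat_invertible (Smat f Am p)"
  shows
    "let Ah = imm (Smat f Am p) (Amat f Am p);
         Bh = imm (Smat f Am p) (Bmat f Am p);
         qv1 = (\<lambda>i. if i = 1 then q1 else 0)
     in (\<forall>i\<ge>1. \<forall>j\<ge>1. transpose (Ah i j) = Ah j i \<and> transpose (Bh i j) = Bh j i) \<and>
        (\<forall>k\<ge>1.
           (\<exists>!w. bvec w \<and> imv Ah w = imv Bh (qI Ah Bh qv1 k)) \<and>
           bvec (qI Ah Bh qv1 k) \<and>
           (\<forall>i>k. qI Ah Bh qv1 k i = 0) \<and>
           (\<forall>j\<in>{1..k}. qI Ah Bh qv1 k j = QII f Am p q1 k j) \<and>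
           tI Ah Bh qv1 k = tII f Am p q1 k \<and>
           omegaI Ah Bh qv1 k = omegaII f Am p q1 k)"
proof -
  have Mder_sym: "\<And>d. transpose (Mder f Am p d) = Mder f Am p d"
    using Mder_transpose[OF r_pos symmetric] .
  show ?thesis
    unfolding Let_def
    using Ahat_transpose[OF Mder_sym] Bhat_transpose[OF Mder_sym]
      lanczos_iterates_coincide[OF r_pos analytic M0_inv S_inv]
    by simp
qed

end
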